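(* Let $A\in\mathbb{R}^{2\times 2}$ with $\mathrm{Re}(\lambda_1(A))>\mathrm{Re}(\lambda_2(A))$ (so $n=2$, $r=1$), and consider the Oja flow $\frac{dU}{dt}=(I_2-UU^{\top})AU$ with $U(0)\in\mathbb{R}^{2}$, $U(0)^{\top}U(0)=1$. Let $K(t)=\Psi^{-1}U(t)$ and $\Sigma=\Psi^{\top}\Psi$ with entries $\Sigma_{11},\Sigma_{22}$ on the diagonal. If $K(0)\neq\begin{bsmallmatrix}0,&\pm\Sigma_{22}^{-1/2}\end{bsmallmatrix}^{\top}$, then $U(t)=\Psi K(t)$ converges to $\mathcal{U}=\{\pm\Sigma_{11}^{-1/2}\psi_1(A)\}$.
   Context: $\Psi=[\psi_1(A),\psi_2(A)]$ is the matrix of unit-norm eigenvectors of $A$ for $\lambda_1(A),\lambda_2(A)$ (these eigenvalues are real and distinct under the hypothesis, so $\Psi$ is real and invertible). *)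

theory Defs
  imports "HOL-Analysis.Analysis"
begin

definition outer :: "real^'n \<Rightarrow> real^'n^'n" where
  "outer u = (\<chi> i j. u $ i * u $ j)"

text \<open>The (complex, with multiplicity) eigenvalues of a real 2x2 matrix are the two roots
  of its characteristic polynomial x^2 - tr(A) x + det(A).\<close>
definition eigenvalues2 :: "real^2^2 \<Rightarrow> complex \<Rightarrow> complex \<Rightarrow> bool" where
  "eigenvalues2 A l1 l2 \<longleftrightarrow>
     l1 + l2 = complex_of_real (trace A) \<and> l1 * l2 = complex_of_real (det A)"

definition unit_eigvec :: "real^2^2 \<Rightarrow> complex \<Rightarrow> real^2 \<Rightarrow> bool" where
  "unit_eigvec A l psi \<longleftrightarrow> norm psi = 1 \<and>
     (\<forall>i. complex_of_real ((A *v psi) $ i) = l * complex_of_real (psi $ i))"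

definition cols2 :: "real^2 \<Rightarrow> real^2 \<Rightarrow> real^2^2" where
  "cols2 p1 p2 = (\<chi> i j. if j = 1 then p1 $ i else p2 $ i)"

end

theory Submission
  imports Defs
begin

(* Measure U(t) against the eigenvectors with the planar cross product: if A v = mu v then
   cross2 v (A u) = (tr A - mu) cross2 v u, so alpha = cross2 psi2 U and beta = cross2 psi1 U solve
   alpha' = (lambda1 - q) alpha and beta' = (lambda2 - q) beta with the same Rayleigh quotient
   q = U . A U.  Hence alpha(t) and beta(t) exp((lambda1 - lambda2) t) are the same positive multiple
   of alpha(0) and beta(0).  As the flow preserves |U| = 1, U(t) is, up to a fixed sign, the
   normalisation of alpha(0) psi1 - beta(0) exp((lambda2 - lambda1) t) psi2, which tends to +-psi1
   as soon as alpha(0) ~= 0.  Since the psi_i are unit vectors, Sigma_11 = Sigma_22 = 1, and the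
   hypothesis on K(0) says exactly that U(0) ~= +-psi2, i.e. alpha(0) ~= 0. *)

lemma matrix_inv_mult_left:
  assumes "invertible A"
  shows "matrix_inv A ** A = mat 1"
  using assms unfolding invertible_def matrix_inv_def by (rule someI2_ex) auto

lemma linear_ode_exp_solution:
  fixes y q :: "real \<Rightarrow> real"
  assumes q: "continuous_on {0..} q"
    and y: "\<And>t. t \<ge> 0 \<Longrightarrow> (y has_real_derivative (c - q t) * y t) (at t within {0..})"
    and "t \<ge> 0"
  shows "y t = y 0 * exp (c * t - integral {0..t} q)"
proof -
  define g where "g s = y s * exp (integral {0..s} q - c * s)" for s
  have "(g has_real_derivative 0) (at s within {0..t})" if s: "s \<in> {0..t}" for s
  proof -
    have "((\<lambda>x. integral {0..x} q) has_real_derivative q s) (at s within {0..t})"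
      using continuous_on_subset[OF q] s by (intro integral_has_real_derivative) auto
    moreover have "(y has_real_derivative (c - q s) * y s) (at s within {0..t})"
      using s by (intro DERIV_subset[OF y]) auto
    ultimately show ?thesis
      unfolding g_def by (auto intro!: derivative_eq_intros simp: algebra_simps)
  qed
  then obtain k where "\<forall>s\<in>{0..t}. g s = k"
    using has_field_derivative_zero_constant[of "{0..t}" g] by auto
  then have "g t = g 0"
    using \<open>t \<ge> 0\<close> by auto
  then show ?thesis
    by (simp add: g_def exp_diff field_simps)
qed

lemma outer_mult_vector: "outer u *v w = (u \<bullet> w) *\<^sub>R u"
  by (simp add: vec_eq_iff outer_def matrix_vector_mult_def inner_vec_def sum_distrib_left algebra_simps)

lemma oja_field_eq: "((mat 1 - outer u) ** A) *v u = A *v u - (u \<bullet> (A *v u)) *\<^sub>R u"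
  by (simp add: matrix_vector_mul_assoc[symmetric] matrix_vector_mult_diff_rdistrib outer_mult_vector)

definition oja_solution :: "real^'n^'n \<Rightarrow> (real \<Rightarrow> real^'n) \<Rightarrow> bool" where
  "oja_solution A U \<longleftrightarrow>
     (\<forall>t\<ge>0. (U has_vector_derivative A *v U t - (U t \<bullet> (A *v U t)) *\<^sub>R U t) (at t within {0..}))"

lemma oja_solution_continuous_on:
  assumes "oja_solution A U"
  shows "continuous_on {0..} U"
  using assms has_vector_derivative_continuous
  unfolding oja_solution_def continuous_on_eq_continuous_within by (metis atLeast_iff)

lemma oja_rayleigh_continuous_on:
  assumes "oja_solution A U"
  shows "continuous_on {0..} (\<lambda>t. U t \<bullet> (A *v U t))"
proof -
  have U: "continuous_on {0..} U"
    using assms by (rule oja_solution_continuous_on)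
  moreover have "continuous_on {0..} (\<lambda>t. A *v U t)"
    using U by (rule linear_continuous_on_compose) simp
  ultimately show ?thesis
    by (rule continuous_on_inner)
qed

lemma oja_solution_unit:
  assumes flow: "oja_solution A U" and init: "U 0 \<bullet> U 0 = 1" and "t \<ge> 0"
  shows "norm (U t) = 1"
proof -
  define q where "q t = U t \<bullet> (A *v U t)" for t
  define s where "s t = U t \<bullet> U t - 1" for t
  have "(s has_real_derivative (0 - 2 * q t) * s t) (at t within {0..})" if "t \<ge> 0" for t
  proof -
    have "(U has_vector_derivative A *v U t - q t *\<^sub>R U t) (at t within {0..})"
      using flow that unfolding oja_solution_def q_def by blast
    then have "(s has_real_derivative 2 * (U t \<bullet> (A *v U t - q t *\<^sub>R U t))) (at t within {0..})"
      unfolding s_def has_vector_derivative_def has_field_derivative_def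
      by (auto intro!: derivative_eq_intros simp: inner_commute algebra_simps)
    then show ?thesis
      by (simp add: s_def q_def algebra_simps)
  qed
  moreover have "continuous_on {0..} (\<lambda>t. 2 * q t)"
    unfolding q_def using flow by (intro continuous_intros oja_rayleigh_continuous_on)
  ultimately have "s t = s 0 * exp (0 * t - integral {0..t} (\<lambda>t. 2 * q t))"
    using \<open>t \<ge> 0\<close> by (intro linear_ode_exp_solution)
  then show ?thesis
    using init by (simp add: s_def norm_eq_1)
qed

definition cross2 :: "real^2 \<Rightarrow> real^2 \<Rightarrow> real" where
  "cross2 v x = v$1 * x$2 - v$2 * x$1"

lemma bounded_linear_cross2: "bounded_linear (cross2 v)"
proof -
  have "cross2 v = (\<lambda>x. vector [- v$2, v$1] \<bullet> x)"
    by (simp add: fun_eq_iff cross2_def inner_vec_def sum_2)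
  then show ?thesis
    by (simp add: bounded_linear_inner_right)
qed

lemma cross2_swap: "cross2 q p = - cross2 p q"
  by (simp add: cross2_def)

lemma cross2_diff_scaleR: "cross2 v (x - c *\<^sub>R y) = cross2 v x - c * cross2 v y"
  by (simp add: cross2_def algebra_simps)

lemma scaleR_cross2_decomposition: "cross2 q p *\<^sub>R u = cross2 q u *\<^sub>R p - cross2 p u *\<^sub>R q"
  by (simp add: vec_eq_iff forall_2 cross2_def algebra_simps)

lemma cross2_eq_0_parallel:
  assumes "cross2 q u = 0"
  shows "(q \<bullet> q) *\<^sub>R u = (q \<bullet> u) *\<^sub>R q"
  using assms by (simp add: vec_eq_iff forall_2 cross2_def inner_vec_def sum_2) algebra

lemma cross2_matrix_eigvec:
  fixes A :: "real^2^2"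
  assumes "A *v v = m *\<^sub>R v"
  shows "cross2 v (A *v u) = (trace A - m) * cross2 v u"
proof -
  have "A$1$1 * v$1 + A$1$2 * v$2 = m * v$1" "A$2$1 * v$1 + A$2$2 * v$2 = m * v$2"
    using assms by (simp_all add: vec_eq_iff forall_2 matrix_vector_mult_def sum_2)
  then show ?thesis
    by (simp add: cross2_def trace_def matrix_vector_mult_def sum_2) algebra
qed

lemma cross2_eigvecs_neq_0:
  fixes A :: "real^2^2"
  assumes p: "A *v p = a *\<^sub>R p" and q: "A *v q = b *\<^sub>R q" and "a \<noteq> b" "p \<noteq> 0" "q \<noteq> 0"
  shows "cross2 q p \<noteq> 0"
proof
  assume "cross2 q p = 0"
  then have pq: "(q \<bullet> q) *\<^sub>R p = (q \<bullet> p) *\<^sub>R q"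
    by (rule cross2_eq_0_parallel)
  have "a *\<^sub>R ((q \<bullet> q) *\<^sub>R p) = A *v ((q \<bullet> q) *\<^sub>R p)"
    by (simp add: p matrix_vector_mult_scaleR scaleR_left_commute)
  also have "\<dots> = b *\<^sub>R ((q \<bullet> q) *\<^sub>R p)"
    by (simp add: pq q matrix_vector_mult_scaleR scaleR_left_commute)
  finally have "((a - b) * (q \<bullet> q)) *\<^sub>R p = 0"
    by (simp add: algebra_simps)
  with assms show False
    by simp
qed

lemma det_cols2: "det (cols2 p q) = cross2 p q"
  by (simp add: det_2 cols2_def cross2_def)

lemma cols2_mult_vector: "cols2 p q *v vector [a, b] = a *\<^sub>R p + b *\<^sub>R q"
  by (simp add: cols2_def vec_eq_iff forall_2 matrix_vector_mult_def sum_2)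

lemma cols2_gram_diagonal:
  "(transpose (cols2 p q) ** cols2 p q) $ 1 $ 1 = p \<bullet> p"
  "(transpose (cols2 p q) ** cols2 p q) $ 2 $ 2 = q \<bullet> q"
  by (simp_all add: cols2_def matrix_matrix_mult_def transpose_def sum_2 inner_vec_def)

lemma matrix_inv_cols2_scaleR_snd:
  assumes "cross2 p q \<noteq> 0"
  shows "matrix_inv (cols2 p q) *v (c *\<^sub>R q) = vector [0, c]"
proof -
  have "invertible (cols2 p q)"
    using assms by (simp add: invertible_det_nz det_cols2)
  moreover have "c *\<^sub>R q = cols2 p q *v vector [0, c]"
    by (simp add: cols2_mult_vector)
  ultimately show ?thesis
    by (simp add: matrix_vector_mul_assoc matrix_inv_mult_left)
qed

lemma matrix_inv_cols2_unit_parallel_snd: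
  assumes "cross2 p q \<noteq> 0" and "q \<bullet> q = 1" and "u \<bullet> u = 1" and "cross2 q u = 0"
  shows "matrix_inv (cols2 p q) *v u \<in> {vector [0, 1], vector [0, -1]}"
proof -
  have u: "u = (q \<bullet> u) *\<^sub>R q"
    using cross2_eq_0_parallel[OF \<open>cross2 q u = 0\<close>] \<open>q \<bullet> q = 1\<close> by simp
  then have "(q \<bullet> u) * (q \<bullet> u) = 1"
    using \<open>u \<bullet> u = 1\<close> \<open>q \<bullet> q = 1\<close> by (metis inner_scaleR_left inner_scaleR_right mult.right_neutral)
  then have "q \<bullet> u = 1 \<or> q \<bullet> u = -1"
    by algebra
  then show ?thesis
    using matrix_inv_cols2_scaleR_snd[OF \<open>cross2 p q \<noteq> 0\<close>, of "q \<bullet> u"] u by auto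
qed

lemma unit_eigvec_real:
  assumes "unit_eigvec A l psi"
  shows "A *v psi = Re l *\<^sub>R psi"
proof -
  have "complex_of_real ((A *v psi) $ i) = l * complex_of_real (psi $ i)" for i
    using assms unfolding unit_eigvec_def by blast
  then have "Re (complex_of_real ((A *v psi) $ i)) = Re (l * complex_of_real (psi $ i))" for i
    by metis
  then show ?thesis
    by (simp add: vec_eq_iff)
qed

lemma eigenvalues2_trace:
  assumes "eigenvalues2 A l1 l2"
  shows "trace A = Re l1 + Re l2"
  using arg_cong[where f = Re, OF conjunct1[OF assms[unfolded eigenvalues2_def]]] by simp

lemma oja_cross2_eigvec:
  fixes A :: "real^2^2"
  assumes v: "A *v v = m *\<^sub>R v" and flow: "oja_solution A U" and "t \<ge> 0"
  shows "cross2 v (U t) =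
    cross2 v (U 0) * exp ((trace A - m) * t - integral {0..t} (\<lambda>s. U s \<bullet> (A *v U s)))"
proof (rule linear_ode_exp_solution[OF oja_rayleigh_continuous_on[OF flow] _ \<open>t \<ge> 0\<close>])
  fix s :: real
  assume "s \<ge> 0"
  then have "(U has_vector_derivative A *v U s - (U s \<bullet> (A *v U s)) *\<^sub>R U s) (at s within {0..})"
    using flow unfolding oja_solution_def by blast
  from bounded_linear.has_vector_derivative[OF bounded_linear_cross2 this, of v]
  show "((\<lambda>s. cross2 v (U s)) has_real_derivative
      (trace A - m - U s \<bullet> (A *v U s)) * cross2 v (U s)) (at s within {0..})"
    by (simp add: has_real_derivative_iff_has_vector_derivative cross2_diff_scaleR
        cross2_matrix_eigvec[OF v] algebra_simps)
qed

lemma oja_2d_eq_sgn: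
  fixes A :: "real^2^2"
  assumes p: "A *v p = a *\<^sub>R p" and q: "A *v q = b *\<^sub>R q" and tr: "trace A = a + b"
    and D: "cross2 q p \<noteq> 0" and flow: "oja_solution A U" and init: "U 0 \<bullet> U 0 = 1"
    and "t \<ge> 0"
  shows "U t = sgn (cross2 q (U 0) *\<^sub>R p - (cross2 p (U 0) * exp ((b - a) * t)) *\<^sub>R q)
    /\<^sub>R sgn (cross2 q p)"
proof -
  define E where "E = exp (a * t - integral {0..t} (\<lambda>s. U s \<bullet> (A *v U s)))"
  define V where "V = cross2 q (U 0) *\<^sub>R p - (cross2 p (U 0) * exp ((b - a) * t)) *\<^sub>R q"
  have "cross2 q (U t) = cross2 q (U 0) * E"
    using oja_cross2_eigvec[OF q flow \<open>t \<ge> 0\<close>] by (simp add: tr E_def)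
  moreover have "cross2 p (U t) = cross2 p (U 0) * exp ((b - a) * t) * E"
    using oja_cross2_eigvec[OF p flow \<open>t \<ge> 0\<close>] by (simp add: tr E_def flip: exp_add)
      (simp add: algebra_simps)
  ultimately have "cross2 q p *\<^sub>R U t = E *\<^sub>R V"
    unfolding scaleR_cross2_decomposition[of q p] V_def by (simp add: algebra_simps)
  then have "sgn (cross2 q p) *\<^sub>R sgn (U t) = sgn E *\<^sub>R sgn V"
    by (metis sgn_scaleR)
  also have "sgn E = 1"
    by (simp add: E_def)
  finally have "sgn (cross2 q p) *\<^sub>R sgn (U t) = sgn V"
    by simp
  moreover have "sgn (U t) = U t"
    using oja_solution_unit[OF flow init \<open>t \<ge> 0\<close>] by (simp add: sgn_div_norm)
  ultimately show ?thesis
    using D by (cases "cross2 q p > 0") (simp_all add: V_def sgn_if, metis minus_minus)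
qed

lemma oja_2d_tendsto:
  fixes A :: "real^2^2"
  assumes p: "A *v p = a *\<^sub>R p" and q: "A *v q = b *\<^sub>R q" and tr: "trace A = a + b"
    and "b < a" "p \<noteq> 0" and D: "cross2 q p \<noteq> 0"
    and flow: "oja_solution A U" and init: "U 0 \<bullet> U 0 = 1" and K0: "cross2 q (U 0) \<noteq> 0"
  shows "(U \<longlongrightarrow> sgn (cross2 q (U 0) / cross2 q p) *\<^sub>R sgn p) at_top"
proof -
  define V where "V t = cross2 q (U 0) *\<^sub>R p - (cross2 p (U 0) * exp ((b - a) * t)) *\<^sub>R q" for t
  have "((\<lambda>t. exp ((b - a) * t)) \<longlongrightarrow> 0) at_top"
    using \<open>b < a\<close> by real_asymp
  then have "(V \<longlongrightarrow> cross2 q (U 0) *\<^sub>R p - (cross2 p (U 0) * 0) *\<^sub>R q) at_top"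
    unfolding V_def by (intro tendsto_intros)
  then have "((\<lambda>t. sgn (V t) /\<^sub>R sgn (cross2 q p))
      \<longlongrightarrow> sgn (cross2 q (U 0) *\<^sub>R p) /\<^sub>R sgn (cross2 q p)) at_top"
    using K0 \<open>p \<noteq> 0\<close> by (intro tendsto_intros) auto
  moreover have "sgn (V t) /\<^sub>R sgn (cross2 q p) = U t" if "t \<ge> 0" for t
    unfolding V_def using oja_2d_eq_sgn[OF p q tr D flow init that] by (rule sym)
  then have "eventually (\<lambda>t. sgn (V t) /\<^sub>R sgn (cross2 q p) = U t) at_top"
    by (auto simp: eventually_at_top_linorder)
  ultimately have "(U \<longlongrightarrow> sgn (cross2 q (U 0) *\<^sub>R p) /\<^sub>R sgn (cross2 q p)) at_top"
    by (rule Lim_transform_eventually)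
  then show ?thesis
    by (simp add: sgn_scaleR mult.commute)
qed

theorem proposition4:
  fixes A :: "real^2^2" and l1 l2 :: complex and psi1 psi2 :: "real^2"
    and U :: "real \<Rightarrow> real^2"
  assumes eig: "eigenvalues2 A l1 l2"
    and gap: "Re l1 > Re l2"
    and psi1: "unit_eigvec A l1 psi1"
    and psi2: "unit_eigvec A l2 psi2"
    and oja: "\<forall>t\<ge>0. (U has_vector_derivative ((mat 1 - outer (U t)) ** A) *v U t) (at t within {0..})"
    and init: "U 0 \<bullet> U 0 = 1"
    and K0: "let Psi = cols2 psi1 psi2; Sigma = transpose Psi ** Psi; K0 = matrix_inv Psi *v U 0
             in K0 \<noteq> vector [0, 1 / sqrt (Sigma $ 2 $ 2)] \<and> K0 \<noteq> vector [0, - 1 / sqrt (Sigma $ 2 $ 2)]"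
  shows "let Psi = cols2 psi1 psi2; Sigma = transpose Psi ** Psi
         in \<exists>u \<in> {(1 / sqrt (Sigma $ 1 $ 1)) *\<^sub>R psi1, - (1 / sqrt (Sigma $ 1 $ 1)) *\<^sub>R psi1}.
              (U \<longlongrightarrow> u) at_top"
proof -
  have p1: "A *v psi1 = Re l1 *\<^sub>R psi1" and p2: "A *v psi2 = Re l2 *\<^sub>R psi2"
    using psi1 psi2 by (simp_all add: unit_eigvec_real)
  have n1: "psi1 \<bullet> psi1 = 1" and n2: "psi2 \<bullet> psi2 = 1"
    using psi1 psi2 by (simp_all add: unit_eigvec_def norm_eq_1)
  have flow: "oja_solution A U"
    using oja by (simp add: oja_solution_def oja_field_eq)
  have "psi1 \<noteq> 0" "psi2 \<noteq> 0"
    using n1 n2 by auto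
  then have D: "cross2 psi2 psi1 \<noteq> 0"
    using cross2_eigvecs_neq_0[OF p1 p2] gap by simp
  have U0_transversal: "cross2 psi2 (U 0) \<noteq> 0"
    using matrix_inv_cols2_unit_parallel_snd[of psi1 psi2 "U 0"] D n2 init K0
    by (auto simp: cross2_swap[of psi2] cols2_gram_diagonal Let_def)
  have "(U \<longlongrightarrow> sgn (cross2 psi2 (U 0) / cross2 psi2 psi1) *\<^sub>R sgn psi1) at_top"
    using oja_2d_tendsto[OF p1 p2 eigenvalues2_trace[OF eig] gap \<open>psi1 \<noteq> 0\<close> D flow init U0_transversal] .
  moreover have "sgn psi1 = psi1"
    using n1 by (simp add: sgn_div_norm norm_eq_sqrt_inner)
  ultimately show ?thesis
    using D U0_transversal n1 by (auto simp: Let_def cols2_gram_diagonal sgn_if split: if_splits)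
qed

end
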